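(* Let $\varphi$ and $\omega$ be Schwarz-type functions, let $F=\ell\circ\omega$, and suppose $T_{F,\varphi}(f)\in\mathcal{P}$ for every $f\in\mathcal{P}$ and that $\varphi$ is not a rotation. Then $T_{F,\varphi}$ has a unique fixed point $G$ in $\mathcal{P}$, and for every $f\in\mathcal{P}$ the iterates $T_{F,\varphi}^n f$ converge to $G$ uniformly on compact subsets of $\mathbb{D}$ as $n\to\infty$. If moreover $\varphi$ is inner (and not a rotation), this unique fixed point is the constant function $1$.
   Context: $\mathbb{D}$ is the open unit disk. $\mathcal{P}$ is the set of analytic $f$ on $\mathbb{D}$ with $\mathrm{Re}\,f>0$ and $f(0)=1$. A Schwarz-type function is an analytic $\varphi:\mathbb{D}\to\mathbb{D}$ with $\varphi(0)=0$. A rotation is a map $z\mapsto\lambda z$ with $|\lambda|=1$. $\ell(z)=\frac{1+z}{1-z}$. $T_{F,\varphi}(f)=F\cdot(f\circ\varphi)$, and $T^n_{F,\varphi}$ is its $n$-th iterate. An inner function is a bounded analytic function on $\mathbb{D}$ with $|\varphi|\le1$ whose radial limits have modulus one almost everywhere on the unit circle. *)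

theory Defs
  imports "HOL-Analysis.Analysis"
begin

definition unit_disk :: "complex set" where
  "unit_disk = ball 0 1"

text \<open>The Caratheodory class: analytic on the disk, positive real part, normalised at 0.
  Functions are total on complex; only their values on the disk matter.\<close>
definition caratheodory :: "(complex \<Rightarrow> complex) set" where
  "caratheodory = {f. f holomorphic_on unit_disk \<and> (\<forall>z\<in>unit_disk. Re (f z) > 0) \<and> f 0 = 1}"

definition schwarz_type :: "(complex \<Rightarrow> complex) \<Rightarrow> bool" where
  "schwarz_type \<phi> \<longleftrightarrow> \<phi> holomorphic_on unit_disk \<and> \<phi> ` unit_disk \<subseteq> unit_disk \<and> \<phi> 0 = 0"

definition is_rotation :: "(complex \<Rightarrow> complex) \<Rightarrow> bool" where
  "is_rotation \<phi> \<longleftrightarrow> (\<exists>c. norm c = 1 \<and> (\<forall>z\<in>unit_disk. \<phi> z = c * z))"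

definition ell :: "complex \<Rightarrow> complex" where
  "ell z = (1 + z) / (1 - z)"

definition T_op :: "(complex \<Rightarrow> complex) \<Rightarrow> (complex \<Rightarrow> complex) \<Rightarrow> (complex \<Rightarrow> complex) \<Rightarrow> (complex \<Rightarrow> complex)" where
  "T_op F \<phi> f = (\<lambda>z. F z * f (\<phi> z))"

definition inner_function :: "(complex \<Rightarrow> complex) \<Rightarrow> bool" where
  "inner_function \<phi> \<longleftrightarrow> \<phi> holomorphic_on unit_disk \<and> (\<forall>z\<in>unit_disk. norm (\<phi> z) \<le> 1) \<and>
     (AE \<theta> in lborel. \<theta> \<in> {0..2*pi} \<longrightarrow>
        (\<exists>L. ((\<lambda>r::real. \<phi> (complex_of_real r * cis \<theta>)) \<longlongrightarrow> L) (at_left 1) \<and> norm L = 1))"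

end

theory Submission
  imports Defs "HOL-Complex_Analysis.Complex_Analysis"
begin

text \<open>
  Every \<open>f \<in> \<P>\<close> has the form \<open>f = \<ell> \<circ> g\<close> with \<open>|g(w)| \<le> |w|\<close> (Schwarz lemma for the Cayley
  transform), which bounds \<open>f\<close> and \<open>f - 1\<close> on every disk \<open>|w| \<le> s < 1\<close>. Since \<open>\<phi>\<close> is a
  Schwarz map but not a rotation, on each disk \<open>|z| < R < 1\<close> it contracts, \<open>|\<phi>(z)| \<le> c|z|\<close>
  with \<open>c < 1\<close>. As \<open>T\<^sup>n f = T\<^sup>n 1 \<cdot> (f \<circ> \<phi>\<^sup>n)\<close>, this gives \<open>|T\<^sup>n f - T\<^sup>n 1| = O(c\<^sup>n)\<close> uniformly
  on compact sets and over all \<open>f \<in> \<P>\<close>. Hence \<open>T\<^sup>n 1\<close> is uniformly Cauchy, all orbits converge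
  to its limit \<open>G\<close>, which lies in \<open>\<P>\<close>, is fixed by \<open>T\<close>, and equals every fixed point \<open>H\<close>
  because the orbit of \<open>H\<close> is constant.

  If \<open>\<phi>\<close> is inner, positivity of \<open>T\<close> on the functions \<open>u \<mapsto> \<ell>(c u)\<close>, \<open>|c| = 1\<close>, gives
  \<open>4 |\<phi>(z)| |Im \<omega>(z)| \<le> 1 - |\<phi>(z)|\<^sup>2\<close>, so \<open>Im \<omega>\<close> has radial limit \<open>0\<close> almost everywhere.
  Cauchy's formula for \<open>\<omega>\<^sup>2\<close>, whose real part has mean \<open>0\<close> on circles, bounds \<open>|\<omega>(w)|\<^sup>2\<close> by
  a multiple of the mean of \<open>(Im \<omega>)\<^sup>2\<close> over circles of radius \<open>r \<rightarrow> 1\<close>, which tends to \<open>0\<close> by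
  dominated convergence. So \<open>\<omega> = 0\<close>, \<open>T 1 = 1\<close>, and uniqueness gives \<open>G = 1\<close>.
\<close>

section \<open>The Caratheodory class\<close>

lemma Re_ell: "Re (ell w) = (1 - (cmod w)^2) / (cmod (1 - w))^2"
proof -
  have "Re (1 + w) * Re (1 - w) + Im (1 + w) * Im (1 - w) = 1 - ((Re w)^2 + (Im w)^2)"
    by (simp add: algebra_simps power2_eq_square)
  then show ?thesis unfolding ell_def Re_divide cmod_power2 by simp
qed

lemma Im_ell: "Im (ell w) = 2 * Im w / (cmod (1 - w))^2"
proof -
  have "Im (1 + w) * Re (1 - w) - Re (1 + w) * Im (1 - w) = 2 * Im w"
    by (simp add: algebra_simps)
  then show ?thesis unfolding ell_def Im_divide cmod_power2 by simp
qed

lemma norm_diff_one_less_norm_add_one: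
  fixes a :: complex
  assumes "0 < Re a"
  shows "cmod (a - 1) < cmod (a + 1)"
proof -
  have "(Re a - 1)^2 + (Im a)^2 < (Re a + 1)^2 + (Im a)^2"
    using assms by (simp add: power2_eq_square algebra_simps)
  then show ?thesis unfolding cmod_def by (simp add: real_sqrt_less_mono)
qed

lemma caratheodory_eq_ell:
  assumes f: "f \<in> caratheodory" and w: "cmod w < 1"
  obtains g where "cmod g \<le> cmod w" "f w = ell g"
proof -
  have Re_pos: "0 < Re (f z)" if "cmod z < 1" for z
    using f that by (auto simp: caratheodory_def unit_disk_def)
  have nz: "f z + 1 \<noteq> 0" if "cmod z < 1" for z
    using Re_pos[OF that] by (metis add_eq_0_iff2 one_complex.sel(1) uminus_complex.sel(1) neg_less_0_iff_less zero_less_one not_less_iff_gr_or_eq)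
  define g where "g = (\<lambda>z. (f z - 1) / (f z + 1))"
  have hol: "g holomorphic_on ball 0 1"
    unfolding g_def using f nz by (auto intro!: holomorphic_intros simp: caratheodory_def unit_disk_def)
  have g0: "g 0 = 0"
    using f by (simp add: g_def caratheodory_def)
  have g_lt: "cmod (g z) < 1" if "cmod z < 1" for z
    using norm_diff_one_less_norm_add_one[OF Re_pos[OF that]] by (simp add: g_def norm_divide divide_less_eq)
  have "cmod (g w) \<le> cmod w"
    using Schwarz_Lemma(1)[OF hol g0 g_lt w] by blast
  moreover have "f w = ell (g w)"
  proof -
    have "1 - g w \<noteq> 0" using g_lt[OF w] by auto
    moreover have "f w * (1 - g w) = 1 + g w" using nz[OF w] by (simp add: g_def field_simps)
    ultimately show ?thesis unfolding ell_def by (simp add: field_simps)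
  qed
  ultimately show ?thesis using that by blast
qed

lemma norm_ell_minus_one_le:
  assumes "cmod g \<le> s" "s < 1"
  shows "cmod (ell g - 1) \<le> 2 * s / (1 - s)"
proof -
  have "1 - g \<noteq> 0" using assms by auto
  then have eq: "ell g - 1 = 2 * g / (1 - g)" unfolding ell_def by (simp add: field_simps)
  have "1 - s \<le> cmod (1 - g)" using assms norm_triangle_ineq2[of 1 g] by simp
  moreover have "0 \<le> s" using assms(1) norm_ge_zero[of g] by linarith
  ultimately show ?thesis
    using assms unfolding eq norm_divide norm_mult by (intro frac_le) auto
qed

lemma Re_ell_ge:
  assumes "cmod g \<le> s" "s < 1"
  shows "(1 - s) / (1 + s) \<le> Re (ell g)"
proof -
  have "0 \<le> cmod g" by simp
  then have pos: "0 < cmod (1 - g)" "0 < 1 + s" "0 < 1 + cmod g"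
    using assms by (auto, linarith+)
  have "(1 - s) * (1 + cmod g) \<le> (1 - cmod g) * (1 + s)"
    using assms by (simp add: algebra_simps)
  then have "(1 - s) / (1 + s) \<le> (1 - cmod g) / (1 + cmod g)"
    using pos by (simp add: divide_simps)
  also have "\<dots> = (1 - (cmod g)^2) / (1 + cmod g)^2"
    by (simp add: power2_eq_square divide_simps) (simp add: algebra_simps)
  also have "\<dots> \<le> (1 - (cmod g)^2) / (cmod (1 - g))^2"
  proof (rule divide_left_mono)
    have "cmod g \<le> 1" using assms by simp
    then show "0 \<le> 1 - (cmod g)^2" by (simp add: power_le_one)
    show "(cmod (1 - g))^2 \<le> (1 + cmod g)^2"
      using norm_triangle_ineq4[of 1 g] pos by (intro power_mono) auto
    show "0 < (1 + cmod g)^2 * (cmod (1 - g))^2"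
      using pos by simp
  qed
  finally show ?thesis by (simp add: Re_ell)
qed

lemma caratheodory_estimates:
  assumes f: "f \<in> caratheodory" and w: "cmod w \<le> s" "s < 1"
  shows "cmod (f w - 1) \<le> 2 * s / (1 - s)"
    and "cmod (f w) \<le> (1 + s) / (1 - s)"
    and "(1 - s) / (1 + s) \<le> Re (f w)"
proof -
  have "cmod w < 1" using w by simp
  then obtain g where g: "cmod g \<le> cmod w" "f w = ell g"
    by (rule caratheodory_eq_ell[OF f])
  then have gs: "cmod g \<le> s" using w by simp
  show diff: "cmod (f w - 1) \<le> 2 * s / (1 - s)"
    using norm_ell_minus_one_le[OF gs w(2)] g by simp
  have "cmod (f w) \<le> 1 + cmod (f w - 1)" using norm_triangle_ineq2[of "f w" 1] by simp
  also have "\<dots> \<le> 1 + 2 * s / (1 - s)" using diff by simp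
  also have "\<dots> = (1 + s) / (1 - s)" using w by (simp add: field_simps)
  finally show "cmod (f w) \<le> (1 + s) / (1 - s)" .
  show "(1 - s) / (1 + s) \<le> Re (f w)"
    using Re_ell_ge[OF gs w(2)] g by simp
qed

lemma const_one_caratheodory: "(\<lambda>_. 1) \<in> caratheodory"
  by (simp add: caratheodory_def)

lemma caratheodory_locally_uniform_limit:
  assumes f: "\<And>n. f n \<in> caratheodory"
    and lim: "\<And>K. compact K \<Longrightarrow> K \<subseteq> unit_disk \<Longrightarrow> uniform_limit K f G sequentially"
  shows "G \<in> caratheodory"
proof -
  have pointwise: "(\<lambda>n. f n z) \<longlonglongrightarrow> G z" if "z \<in> unit_disk" for z
    using lim[of "{z}"] that by (auto intro: tendsto_uniform_limitI)
  have "G holomorphic_on ball 0 1"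
  proof (rule holomorphic_uniform_sequence[where f = f])
    show "f n holomorphic_on ball 0 1" for n
      using f by (simp add: caratheodory_def unit_disk_def)
    fix z :: complex assume "z \<in> ball 0 1"
    then have d: "0 < (1 - cmod z) / 2" "cball z ((1 - cmod z) / 2) \<subseteq> ball 0 1"
      by (auto simp: cball_subset_ball_iff dist_norm field_simps)
    moreover have "uniform_limit (cball z ((1 - cmod z) / 2)) f G sequentially"
      using d(2) by (intro lim) (auto simp: unit_disk_def)
    ultimately show "\<exists>d>0. cball z d \<subseteq> ball 0 1 \<and> uniform_limit (cball z d) f G sequentially"
      by blast
  qed simp
  moreover have "0 < Re (G z)" if z: "z \<in> unit_disk" for z
  proof -
    have z1: "cmod z < 1" using z by (simp add: unit_disk_def)
    have "(\<lambda>n. Re (f n z)) \<longlonglongrightarrow> Re (G z)"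
      by (intro tendsto_Re pointwise z)
    then have "(1 - cmod z) / (1 + cmod z) \<le> Re (G z)"
      using caratheodory_estimates(3)[OF f order_refl z1] by (intro LIMSEQ_le_const) auto
    moreover have "0 < (1 - cmod z) / (1 + cmod z)"
      using z1 by (intro divide_pos_pos) (auto simp: add_pos_nonneg)
    ultimately show ?thesis by linarith
  qed
  moreover have "G 0 = 1"
    using pointwise[of 0] f by (simp add: caratheodory_def unit_disk_def LIMSEQ_const_iff)
  ultimately show ?thesis by (simp add: caratheodory_def unit_disk_def)
qed

section \<open>Schwarz maps that are not rotations\<close>

lemma schwarz_type_norm_less:
  assumes "schwarz_type \<phi>" "\<not> is_rotation \<phi>" "cmod z < 1" "z \<noteq> 0"
  shows "cmod (\<phi> z) < cmod z"
proof -
  have hol: "\<phi> holomorphic_on ball 0 1" and \<phi>0: "\<phi> 0 = 0"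
    and lt: "\<And>w. cmod w < 1 \<Longrightarrow> cmod (\<phi> w) < 1"
    using assms(1) by (auto simp: schwarz_type_def unit_disk_def image_subset_iff)
  have "cmod (\<phi> z) \<noteq> cmod z"
  proof
    assume "cmod (\<phi> z) = cmod z"
    then obtain \<alpha> where "\<forall>w. cmod w < 1 \<longrightarrow> \<phi> w = \<alpha> * w" "cmod \<alpha> = 1"
      using Schwarz_Lemma(3)[OF hol \<phi>0 lt assms(3)] assms(3,4) by blast
    then have "is_rotation \<phi>" by (auto simp: is_rotation_def unit_disk_def)
    with assms(2) show False by blast
  qed
  with Schwarz_Lemma(1)[OF hol \<phi>0 lt assms(3)] show ?thesis by simp
qed

lemma Schwarz_Lemma_ball:
  assumes hol: "f holomorphic_on ball 0 R" and f0: "f 0 = 0"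
    and bound: "\<And>z. cmod z < R \<Longrightarrow> cmod (f z) < M" and z: "cmod z < R"
  shows "cmod (f z) \<le> M / R * cmod z"
proof -
  have R: "0 < R" using z norm_ge_zero[of z] by linarith
  have M: "0 < M" using bound[of 0] R f0 by simp
  define g where "g = (\<lambda>w. f (of_real R * w) / of_real M)"
  have "(\<lambda>w. of_real R * w) ` ball 0 1 \<subseteq> ball (0::complex) R"
    using R by (auto simp: norm_mult)
  then have "g holomorphic_on ball 0 1"
    unfolding g_def
    by (intro holomorphic_intros holomorphic_on_compose_gen[OF _ hol, unfolded o_def]) auto
  moreover have "g 0 = 0" by (simp add: g_def f0)
  moreover have "cmod (g w) < 1" if "cmod w < 1" for w
    using bound[of "of_real R * w"] that R M by (simp add: g_def norm_mult norm_divide)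
  moreover have "cmod (z / of_real R) < 1" using z R by (simp add: norm_divide)
  ultimately have "cmod (g (z / of_real R)) \<le> cmod (z / of_real R)"
    by (rule Schwarz_Lemma(1))
  then show ?thesis using R M by (simp add: g_def norm_divide divide_simps mult.commute)
qed

lemma schwarz_type_contraction:
  assumes st: "schwarz_type \<phi>" and nr: "\<not> is_rotation \<phi>" and R: "0 < R" "R < 1"
  obtains c where "0 \<le> c" "c < 1" "\<And>z. cmod z < R \<Longrightarrow> cmod (\<phi> z) \<le> c * cmod z"
proof -
  have hol: "\<phi> holomorphic_on ball 0 1" and \<phi>0: "\<phi> 0 = 0"
    using st by (auto simp: schwarz_type_def unit_disk_def)
  have "continuous_on (cball 0 R) (\<lambda>z. cmod (\<phi> z))"
    using R by (intro continuous_intros holomorphic_on_imp_continuous_on holomorphic_on_subset[OF hol]) auto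
  then obtain z0 where z0: "z0 \<in> cball 0 R" and max: "\<And>z. z \<in> cball 0 R \<Longrightarrow> cmod (\<phi> z) \<le> cmod (\<phi> z0)"
    using continuous_attains_sup[of "cball 0 R" "\<lambda>z. cmod (\<phi> z)"] R by fastforce
  \<comment> \<open>the maximum is attained, so the strict Schwarz lemma keeps it below \<open>R\<close>\<close>
  have "cmod (\<phi> z0) < R"
  proof (cases "z0 = 0")
    case False
    then show ?thesis using schwarz_type_norm_less[OF st nr _ False] z0 R by fastforce
  qed (use \<phi>0 R in simp)
  define M where "M = (cmod (\<phi> z0) + R) / 2"
  have M: "cmod (\<phi> z0) < M" "M < R" "0 \<le> M" using \<open>cmod (\<phi> z0) < R\<close> R by (auto simp: M_def)
  show ?thesis
  proof
    show "0 \<le> M / R" "M / R < 1" using M R by auto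
    fix z :: complex assume z: "cmod z < R"
    have "\<phi> holomorphic_on ball 0 R" using R by (intro holomorphic_on_subset[OF hol]) auto
    moreover have "cmod (\<phi> w) < M" if "cmod w < R" for w
      using max[of w] that M by fastforce
    ultimately show "cmod (\<phi> z) \<le> M / R * cmod z"
      using Schwarz_Lemma_ball[of \<phi> R M z] \<phi>0 z by blast
  qed
qed

lemma norm_funpow_le_power:
  assumes c: "0 \<le> c" "c < 1" and contr: "\<And>z. cmod z < R \<Longrightarrow> cmod (\<phi> z) \<le> c * cmod z"
    and z: "cmod z < R"
  shows "cmod ((\<phi> ^^ n) z) \<le> c ^ n * cmod z"
proof (induction n)
  case 0
  then show ?case by simp
next
  case (Suc n)
  have "c ^ n * cmod z \<le> cmod z"
    using c by (simp add: mult_left_le_one_le power_le_one)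
  then have "cmod ((\<phi> ^^ n) z) < R" using Suc z by linarith
  then have "cmod ((\<phi> ^^ Suc n) z) \<le> c * cmod ((\<phi> ^^ n) z)" using contr by simp
  also have "\<dots> \<le> c * (c ^ n * cmod z)" using Suc c by (simp add: mult_left_mono)
  finally show ?case by simp
qed

section \<open>Convergence of the iterates\<close>

lemma funpow_T_op_caratheodory:
  assumes "\<forall>f\<in>caratheodory. T_op F \<phi> f \<in> caratheodory" "h \<in> caratheodory"
  shows "(T_op F \<phi> ^^ n) h \<in> caratheodory"
  using assms by (induction n) auto

lemma funpow_T_op_factor:
  "(T_op F \<phi> ^^ n) h z = (T_op F \<phi> ^^ n) (\<lambda>_. 1) z * h ((\<phi> ^^ n) z)"
proof (induction n arbitrary: z)
  case 0
  then show ?case by simp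
next
  case (Suc n)
  have "(T_op F \<phi> ^^ Suc n) h z = F z * (T_op F \<phi> ^^ n) h (\<phi> z)"
    by (simp add: T_op_def)
  also have "\<dots> = F z * ((T_op F \<phi> ^^ n) (\<lambda>_. 1) (\<phi> z) * h ((\<phi> ^^ n) (\<phi> z)))"
    using Suc by simp
  also have "(\<phi> ^^ n) (\<phi> z) = (\<phi> ^^ Suc n) z"
    by (metis comp_apply funpow_Suc_right)
  also have "F z * ((T_op F \<phi> ^^ n) (\<lambda>_. 1) (\<phi> z) * h ((\<phi> ^^ Suc n) z))
      = (T_op F \<phi> ^^ Suc n) (\<lambda>_. 1) z * h ((\<phi> ^^ Suc n) z)"
    by (simp add: T_op_def)
  finally show ?case .
qed

lemma funpow_T_op_fixed:
  assumes "\<phi> ` unit_disk \<subseteq> unit_disk" and "\<forall>z\<in>unit_disk. T_op F \<phi> H z = H z"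
    and "z \<in> unit_disk"
  shows "(T_op F \<phi> ^^ n) H z = H z"
  using assms(3)
proof (induction n arbitrary: z)
  case 0
  then show ?case by simp
next
  case (Suc n)
  then have "\<phi> z \<in> unit_disk" using assms(1) by blast
  then show ?case using Suc assms(2) by (simp add: T_op_def)
qed

lemma T_op_fixed_of_limit:
  assumes "\<phi> ` unit_disk \<subseteq> unit_disk"
    and lim: "\<And>z. z \<in> unit_disk \<Longrightarrow> (\<lambda>n. (T_op F \<phi> ^^ n) f z) \<longlonglongrightarrow> G z"
    and z: "z \<in> unit_disk"
  shows "T_op F \<phi> G z = G z"
proof -
  have "(\<lambda>n. (T_op F \<phi> ^^ Suc n) f z) \<longlonglongrightarrow> G z"
    using lim[OF z] by (rule LIMSEQ_Suc)
  moreover have "(\<lambda>n. (T_op F \<phi> ^^ Suc n) f z) \<longlonglongrightarrow> F z * G (\<phi> z)"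
    using assms(1) z by (auto simp: T_op_def intro!: tendsto_mult lim)
  ultimately show ?thesis
    using LIMSEQ_unique by (metis T_op_def)
qed

lemma compact_subset_unit_disk_radius:
  assumes "compact K" "K \<subseteq> unit_disk"
  obtains R where "0 < R" "R < 1" "\<And>z. z \<in> K \<Longrightarrow> cmod z < R"
proof (cases "K = {}")
  case True
  show ?thesis by (rule that[of "1/2"]) (use True in auto)
next
  case False
  obtain z0 where z0: "z0 \<in> K" "\<And>z. z \<in> K \<Longrightarrow> cmod z \<le> cmod z0"
    using continuous_attains_sup[OF assms(1) False, of norm] by (auto intro: continuous_intros)
  have "cmod z0 < 1" using z0 assms(2) by (auto simp: unit_disk_def)
  show ?thesis
  proof (rule that[of "(cmod z0 + 1) / 2"])
    show "0 < (cmod z0 + 1) / 2" by (simp add: add_nonneg_pos)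
    show "(cmod z0 + 1) / 2 < 1" using \<open>cmod z0 < 1\<close> by simp
    show "cmod z < (cmod z0 + 1) / 2" if "z \<in> K" for z using z0(2)[OF that] \<open>cmod z0 < 1\<close> by simp
  qed
qed

text \<open>\<open>T\<^sup>n h - T\<^sup>n 1 = T\<^sup>n 1 \<cdot> (h \<circ> \<phi>\<^sup>n - 1)\<close>: the first factor is bounded on \<open>K\<close> and the
  second is \<open>O(c\<^sup>n)\<close> because \<open>\<phi>\<^sup>n\<close> contracts \<open>K\<close> geometrically towards \<open>0\<close>, where \<open>h = 1\<close>.\<close>

lemma funpow_T_op_geometric_estimate:
  assumes TP: "\<forall>f\<in>caratheodory. T_op F \<phi> f \<in> caratheodory" and st: "schwarz_type \<phi>"
    and nr: "\<not> is_rotation \<phi>" and K: "compact K" "K \<subseteq> unit_disk"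
  obtains c B where "0 \<le> c" "c < 1"
    "\<And>h n z. h \<in> caratheodory \<Longrightarrow> z \<in> K \<Longrightarrow>
        cmod ((T_op F \<phi> ^^ n) h z - (T_op F \<phi> ^^ n) (\<lambda>_. 1) z) \<le> B * c ^ n"
proof -
  obtain R where R: "0 < R" "R < 1" "\<And>z. z \<in> K \<Longrightarrow> cmod z < R"
    using compact_subset_unit_disk_radius[OF K] by blast
  obtain c where c: "0 \<le> c" "c < 1" "\<And>z. cmod z < R \<Longrightarrow> cmod (\<phi> z) \<le> c * cmod z"
    using schwarz_type_contraction[OF st nr R(1,2)] by blast
  show ?thesis
  proof (rule that[OF c(1,2)])
    fix h n z assume h: "h \<in> caratheodory" and "z \<in> K"
    have z: "cmod z < R" using R(3) \<open>z \<in> K\<close> by blast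
    define s where "s = c ^ n * R"
    have cn: "0 \<le> c ^ n" "c ^ n \<le> 1" using c by (auto simp: power_le_one)
    then have s: "0 \<le> s" "s \<le> c ^ n" "s \<le> R" using R by (auto simp: s_def mult_left_le_one_le mult_right_le_one_le)
    have "cmod ((\<phi> ^^ n) z) \<le> c ^ n * cmod z" by (rule norm_funpow_le_power[OF c z])
    also have "\<dots> \<le> s" unfolding s_def using z cn by (intro mult_left_mono) auto
    finally have "cmod (h ((\<phi> ^^ n) z) - 1) \<le> 2 * s / (1 - s)"
      using caratheodory_estimates(1)[OF h] s R by simp
    also have "\<dots> \<le> 2 * c ^ n / (1 - R)"
      using s R by (intro frac_le) auto
    finally have h_bound: "cmod (h ((\<phi> ^^ n) z) - 1) \<le> 2 * c ^ n / (1 - R)" .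
    have "(T_op F \<phi> ^^ n) (\<lambda>_. 1) \<in> caratheodory"
      by (rule funpow_T_op_caratheodory[OF TP const_one_caratheodory])
    then have one_bound: "cmod ((T_op F \<phi> ^^ n) (\<lambda>_. 1) z) \<le> (1 + R) / (1 - R)"
      using caratheodory_estimates(2)[of _ z R] z R by simp
    have "cmod ((T_op F \<phi> ^^ n) h z - (T_op F \<phi> ^^ n) (\<lambda>_. 1) z)
        = cmod ((T_op F \<phi> ^^ n) (\<lambda>_. 1) z) * cmod (h ((\<phi> ^^ n) z) - 1)"
      by (subst funpow_T_op_factor) (simp add: norm_mult[symmetric] algebra_simps)
    also have "\<dots> \<le> (1 + R) / (1 - R) * (2 * c ^ n / (1 - R))"
      using one_bound h_bound R by (intro mult_mono) auto
    also have "\<dots> = (1 + R) / (1 - R) * (2 / (1 - R)) * c ^ n" by simp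
    finally show "cmod ((T_op F \<phi> ^^ n) h z - (T_op F \<phi> ^^ n) (\<lambda>_. 1) z)
        \<le> (1 + R) / (1 - R) * (2 / (1 - R)) * c ^ n" .
  qed
qed

lemma uniform_limit_geometric_Cauchy:
  fixes f :: "nat \<Rightarrow> 'a \<Rightarrow> 'b::complete_space"
  assumes c: "0 \<le> c" "c < 1"
    and bound: "\<And>x m n. x \<in> X \<Longrightarrow> n \<le> m \<Longrightarrow> dist (f m x) (f n x) \<le> B * c ^ n"
  shows "uniform_limit X f (\<lambda>x. lim (\<lambda>n. f n x)) sequentially"
proof -
  have "uniformly_Cauchy_on X f"
  proof (rule uniformly_Cauchy_onI)
    fix e :: real assume "0 < e"
    have "(\<lambda>n. B * c ^ n) \<longlonglongrightarrow> 0"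
      using c by (intro tendsto_mult_right_zero LIMSEQ_realpow_zero)
    from order_tendstoD(2)[OF this \<open>0 < e\<close>]
    obtain M where M: "\<And>n. M \<le> n \<Longrightarrow> B * c ^ n < e"
      by (auto simp: eventually_sequentially)
    have "dist (f m x) (f n x) < e" if "x \<in> X" "M \<le> m" "M \<le> n" for x m n
    proof (cases "n \<le> m")
      case True
      then show ?thesis using bound[OF that(1) True] M[OF that(3)] by linarith
    next
      case False
      then have "m \<le> n" by simp
      then show ?thesis
        using bound[OF that(1) \<open>m \<le> n\<close>] M[OF that(2)] dist_commute[of "f m x" "f n x"] by linarith
    qed
    then show "\<exists>M. \<forall>x\<in>X. \<forall>m\<ge>M. \<forall>n\<ge>M. dist (f m x) (f n x) < e" by blast
  qed
  then show ?thesis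
    using Cauchy_uniformly_convergent uniformly_convergent_uniform_limit_iff by blast
qed

lemma uniform_limit_geometric_perturbation:
  fixes f g :: "nat \<Rightarrow> 'a \<Rightarrow> 'b::metric_space"
  assumes lim: "uniform_limit X f l sequentially" and c: "0 \<le> c" "c < 1"
    and close: "\<And>x n. x \<in> X \<Longrightarrow> dist (g n x) (f n x) \<le> B * c ^ n"
  shows "uniform_limit X g l sequentially"
proof (rule uniform_limitI)
  fix e :: real assume "0 < e"
  have "(\<lambda>n. B * c ^ n) \<longlonglongrightarrow> 0"
    using c by (intro tendsto_mult_right_zero LIMSEQ_realpow_zero)
  then have "\<forall>\<^sub>F n in sequentially. B * c ^ n < e / 2"
    using \<open>0 < e\<close> by (intro order_tendstoD(2)) auto
  moreover have "\<forall>\<^sub>F n in sequentially. \<forall>x\<in>X. dist (f n x) (l x) < e / 2"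
    using \<open>0 < e\<close> by (intro uniform_limitD[OF lim]) auto
  ultimately show "\<forall>\<^sub>F n in sequentially. \<forall>x\<in>X. dist (g n x) (l x) < e"
  proof eventually_elim
    case (elim n)
    show ?case
    proof
      fix x assume "x \<in> X"
      then show "dist (g n x) (l x) < e"
        using dist_triangle[of "g n x" "l x" "f n x"] close[of x n] elim by fastforce
    qed
  qed
qed

lemma uniform_limit_funpow_T_op:
  assumes TP: "\<forall>f\<in>caratheodory. T_op F \<phi> f \<in> caratheodory" and st: "schwarz_type \<phi>"
    and nr: "\<not> is_rotation \<phi>" and K: "compact K" "K \<subseteq> unit_disk" and h: "h \<in> caratheodory"
  shows "uniform_limit K (\<lambda>n. (T_op F \<phi> ^^ n) h) (\<lambda>z. lim (\<lambda>n. (T_op F \<phi> ^^ n) (\<lambda>_. 1) z)) sequentially"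
proof -
  let ?T = "T_op F \<phi>"
  obtain c B where c: "0 \<le> c" "c < 1" and est: "\<And>h n z. h \<in> caratheodory \<Longrightarrow> z \<in> K \<Longrightarrow>
        cmod ((?T ^^ n) h z - (?T ^^ n) (\<lambda>_. 1) z) \<le> B * c ^ n"
    using funpow_T_op_geometric_estimate[OF TP st nr K] by blast
  have "uniform_limit K (\<lambda>n. (?T ^^ n) (\<lambda>_. 1)) (\<lambda>z. lim (\<lambda>n. (?T ^^ n) (\<lambda>_. 1) z)) sequentially"
  proof (rule uniform_limit_geometric_Cauchy[OF c])
    fix z and m n :: nat assume z: "z \<in> K" and "n \<le> m"
    then obtain k where "m = n + k" using le_Suc_ex by blast
    then have "(?T ^^ m) (\<lambda>_. 1) = (?T ^^ n) ((?T ^^ k) (\<lambda>_. 1))" by (simp add: funpow_add)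
    moreover have "(?T ^^ k) (\<lambda>_. 1) \<in> caratheodory"
      by (rule funpow_T_op_caratheodory[OF TP const_one_caratheodory])
    ultimately show "dist ((?T ^^ m) (\<lambda>_. 1) z) ((?T ^^ n) (\<lambda>_. 1) z) \<le> B * c ^ n"
      using est[OF _ z] by (simp add: dist_norm)
  qed
  then show ?thesis
    by (rule uniform_limit_geometric_perturbation[OF _ c]) (use est[OF h] in \<open>simp add: dist_norm\<close>)
qed

section \<open>Inner symbols force \<open>\<omega> = 0\<close>\<close>

lemma ell_scaled_caratheodory:
  assumes c: "cmod c \<le> 1"
  shows "(\<lambda>u. ell (c * u)) \<in> caratheodory"
proof -
  have lt: "cmod (c * u) < 1" if "cmod u < 1" for u
  proof -
    have "cmod c * cmod u \<le> 1 * cmod u" using c by (intro mult_right_mono) auto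
    then show ?thesis using that by (simp add: norm_mult)
  qed
  have nz: "1 - c * u \<noteq> 0" if "cmod u < 1" for u
    using lt[OF that] by auto
  have "(\<lambda>u. (1 + c * u) / (1 - c * u)) holomorphic_on ball 0 1"
    using nz by (auto intro!: holomorphic_intros)
  moreover have "0 < Re (ell (c * u))" if "cmod u < 1" for u
  proof -
    have "(cmod (c * u))^2 < 1" using lt[OF that] by (simp add: abs_square_less_1)
    moreover have "0 < cmod (1 - c * u)" using nz[OF that] by simp
    ultimately show ?thesis by (simp add: Re_ell)
  qed
  ultimately show ?thesis by (auto simp: caratheodory_def unit_disk_def ell_def)
qed

lemma Re_mult_ell_imaginary:
  fixes t :: real
  shows "Re (A * ell (of_real t * \<i>)) = ((1 - t^2) * Re A - 2 * t * Im A) / (1 + t^2)"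
proof -
  have n: "(cmod (1 - of_real t * \<i>))^2 = 1 + t^2" by (simp add: cmod_power2)
  have R: "Re (ell (of_real t * \<i>)) = (1 - t^2) / (1 + t^2)"
    unfolding Re_ell n by (simp add: norm_mult)
  have I: "Im (ell (of_real t * \<i>)) = 2 * t / (1 + t^2)"
    unfolding Im_ell n by simp
  have "Re (A * ell (of_real t * \<i>)) = Re A * Re (ell (of_real t * \<i>)) - Im A * Im (ell (of_real t * \<i>))"
    by simp
  also have "\<dots> = ((1 - t^2) * Re A - 2 * t * Im A) / (1 + t^2)"
    unfolding R I by (simp add: diff_divide_distrib add_divide_distrib algebra_simps)
  finally show ?thesis .
qed

text \<open>Test the positivity of \<open>T\<close> at \<open>z\<close> on \<open>u \<mapsto> \<ell>(c u)\<close>, with \<open>|c| = 1\<close> chosen so that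
  \<open>c \<phi>(z) = \<plusminus>i |\<phi>(z)|\<close>.\<close>

lemma abs_Im_le_of_T_op_positive:
  assumes st\<omega>: "schwarz_type \<omega>" and st\<phi>: "schwarz_type \<phi>"
    and TP: "\<forall>f\<in>caratheodory. T_op (ell \<circ> \<omega>) \<phi> f \<in> caratheodory"
    and z: "z \<in> unit_disk"
  shows "4 * cmod (\<phi> z) * \<bar>Im (\<omega> z)\<bar> \<le> 1 - (cmod (\<phi> z))^2"
proof (cases "\<phi> z = 0")
  case False
  define \<rho> where "\<rho> = cmod (\<phi> z)"
  have "\<phi> z \<in> unit_disk" using st\<phi> z by (auto simp: schwarz_type_def)
  then have \<rho>: "0 < \<rho>" "\<rho> < 1" using False by (auto simp: \<rho>_def unit_disk_def)
  define A where "A = ell (\<omega> z)"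
  have key: "0 < (1 - t^2) * Re A - 2 * t * Im A" if t: "\<bar>t\<bar> = \<rho>" for t :: real
  proof -
    define c where "c = of_real t * \<i> * cnj (\<phi> z) / of_real (\<rho>^2)"
    have "cmod c = 1" using t \<rho> by (simp add: c_def norm_mult norm_divide \<rho>_def power2_eq_square)
    then have "T_op (ell \<circ> \<omega>) \<phi> (\<lambda>u. ell (c * u)) \<in> caratheodory"
      using TP ell_scaled_caratheodory by simp
    then have "0 < Re (T_op (ell \<circ> \<omega>) \<phi> (\<lambda>u. ell (c * u)) z)"
      using z by (simp add: caratheodory_def)
    moreover have "c * \<phi> z = of_real t * \<i>"
    proof -
      have "cnj (\<phi> z) * \<phi> z = of_real (\<rho>^2)"
        using complex_norm_square[of "\<phi> z"] by (simp add: \<rho>_def mult.commute)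
      then show ?thesis using \<rho> by (simp add: c_def field_simps)
    qed
    ultimately have "0 < Re (A * ell (of_real t * \<i>))"
      by (simp only: T_op_def A_def o_def)
    moreover have "0 < 1 + t^2" by (simp add: add_pos_nonneg)
    ultimately show ?thesis unfolding Re_mult_ell_imaginary by (simp add: zero_less_divide_iff)
  qed
  have "2 * \<rho> * \<bar>Im A\<bar> < (1 - \<rho>^2) * Re A"
    using key[of \<rho>] key[of "-\<rho>"] \<rho> by (cases "0 \<le> Im A") auto
  moreover have "\<omega> z \<in> unit_disk" using st\<omega> z by (auto simp: schwarz_type_def)
  then have "0 < (cmod (1 - \<omega> z))^2" by (auto simp: unit_disk_def)
  ultimately have "2 * \<rho> * (2 * \<bar>Im (\<omega> z)\<bar>) < (1 - \<rho>^2) * (1 - (cmod (\<omega> z))^2)"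
    unfolding A_def Re_ell Im_ell by (simp add: abs_divide divide_simps mult.assoc)
  also have "\<dots> \<le> (1 - \<rho>^2) * 1"
    using \<rho> by (intro mult_left_mono) (auto simp: power_le_one)
  finally show ?thesis by (simp add: \<rho>_def)
qed simp

lemma Im_tendsto_zero_radially:
  assumes st\<omega>: "schwarz_type \<omega>" and st\<phi>: "schwarz_type \<phi>"
    and TP: "\<forall>f\<in>caratheodory. T_op (ell \<circ> \<omega>) \<phi> f \<in> caratheodory"
    and lim: "((\<lambda>r::real. \<phi> (complex_of_real r * cis \<theta>)) \<longlongrightarrow> L) (at_left 1)" and L: "norm L = 1"
    and r: "\<And>k. 0 < r k \<and> r k < 1" and r1: "r \<longlonglongrightarrow> 1"
  shows "(\<lambda>k. Im (\<omega> (complex_of_real (r k) * cis \<theta>))) \<longlonglongrightarrow> 0"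
proof -
  define z where "z = (\<lambda>k. complex_of_real (r k) * cis \<theta>)"
  have z: "z k \<in> unit_disk" for k using r[of k] by (simp add: z_def unit_disk_def norm_mult)
  have "filterlim r (at_left 1) sequentially"
    using r r1 by (intro tendsto_imp_filterlim_at_left) auto
  then have norm_lim: "(\<lambda>k. cmod (\<phi> (z k))) \<longlonglongrightarrow> 1"
    using filterlim_compose[OF lim] L unfolding z_def by (metis tendsto_norm)
  have "(\<lambda>k. (1 - (cmod (\<phi> (z k)))^2) / (4 * cmod (\<phi> (z k)))) \<longlonglongrightarrow> (1 - 1^2) / (4 * 1)"
    by (intro tendsto_intros norm_lim) auto
  then have bound_lim: "(\<lambda>k. (1 - (cmod (\<phi> (z k)))^2) / (4 * cmod (\<phi> (z k)))) \<longlonglongrightarrow> 0"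
    by simp
  have "\<forall>\<^sub>F k in sequentially. 0 < cmod (\<phi> (z k))"
    using order_tendstoD(1)[OF norm_lim, of 0] by simp
  then have "\<forall>\<^sub>F k in sequentially. norm (Im (\<omega> (z k))) \<le> (1 - (cmod (\<phi> (z k)))^2) / (4 * cmod (\<phi> (z k)))"
    by eventually_elim
      (use abs_Im_le_of_T_op_positive[OF st\<omega> st\<phi> TP z] in \<open>simp add: pos_le_divide_eq mult_ac\<close>)
  then show ?thesis
    using bound_lim unfolding z_def by (rule Lim_null_comparison)
qed

lemma norm_circlepath_0: "cmod (circlepath 0 r t) = \<bar>r\<bar>"
  by (simp add: circlepath norm_mult)

lemma circlepath_0_eq_cis: "circlepath 0 r t = complex_of_real r * cis (2 * pi * t)"
  by (simp add: circlepath cis_conv_exp mult_ac)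

lemma continuous_on_compose_circlepath_0:
  assumes g: "continuous_on (ball 0 1) g" and r: "0 \<le> r" "r < 1"
  shows "continuous_on {0..1} (\<lambda>t. g (circlepath 0 r t))"
proof (rule continuous_on_compose2[OF g])
  show "continuous_on {0..1} (circlepath 0 r)"
    using path_circlepath[of 0 r] by (simp add: path_def)
  show "circlepath 0 r ` {0..1} \<subseteq> ball 0 1"
    using r by (auto simp: norm_circlepath_0)
qed

lemma Cauchy_integral_circlepath_0_param:
  assumes hol: "h holomorphic_on ball 0 1" and r: "0 < r" "r < 1" and w: "cmod w < r"
  shows "((\<lambda>t. h (circlepath 0 r t) * circlepath 0 r t / (circlepath 0 r t - w)) has_integral h w) {0..1}"
proof -
  have "continuous_on (cball 0 r) h"
    using r by (intro holomorphic_on_imp_continuous_on holomorphic_on_subset[OF hol]) auto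
  moreover have "h holomorphic_on ball 0 r" using r by (intro holomorphic_on_subset[OF hol]) auto
  ultimately have "((\<lambda>u. h u / (u - w)) has_contour_integral (2 * of_real pi * \<i> * h w)) (circlepath 0 r)"
    using w by (intro Cauchy_integral_circlepath) auto
  then have "((\<lambda>t. h (circlepath 0 r t) / (circlepath 0 r t - w) * vector_derivative (circlepath 0 r) (at t within {0..1}))
      has_integral (2 * of_real pi * \<i> * h w)) {0..1}"
    unfolding has_contour_integral_def .
  moreover have "vector_derivative (circlepath 0 r) (at t within {0..1}) = 2 * of_real pi * \<i> * circlepath 0 r t"
    if "t \<in> {0..1}" for t
    using that by (subst vector_derivative_circlepath01) (auto simp: circlepath)
  ultimately have "((\<lambda>t. (2 * of_real pi * \<i>) * (h (circlepath 0 r t) * circlepath 0 r t / (circlepath 0 r t - w)))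
      has_integral (2 * of_real pi * \<i> * h w)) {0..1}"
    by (subst has_integral_cong[symmetric]) auto
  then show ?thesis by (subst (asm) has_integral_mult_right_iff) auto
qed

text \<open>Cauchy's formula for \<open>\<omega>\<^sup>2\<close> on the circle of radius \<open>r\<close>; since \<open>\<omega>(0) = 0\<close>, the mean of
  \<open>Re \<omega>\<^sup>2\<close> over the circle vanishes and \<open>|\<omega>\<^sup>2| = Re \<omega>\<^sup>2 + 2 (Im \<omega>)\<^sup>2\<close>.\<close>

lemma norm_square_le_integral_Im_square:
  assumes hol: "\<omega> holomorphic_on ball 0 1" and \<omega>0: "\<omega> 0 = 0"
    and r: "0 < r" "r < 1" and w: "cmod w < r"
  shows "(cmod (\<omega> w))^2 \<le> 2 * integral {0..1} (\<lambda>t. (Im (\<omega> (circlepath 0 r t)))^2) * (r / (r - cmod w))"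
proof -
  define \<gamma> where "\<gamma> = circlepath 0 r"
  define I where "I = integral {0..1} (\<lambda>t. (Im (\<omega> (\<gamma> t)))^2)"
  define C where "C = r / (r - cmod w)"
  have hol2: "(\<lambda>u. (\<omega> u)^2) holomorphic_on ball 0 1" using hol by (intro holomorphic_intros)
  have \<gamma>: "cmod (\<gamma> t) = r" "\<gamma> t \<noteq> 0" for t
    using r norm_circlepath_0[of r t] by (auto simp: \<gamma>_def)
  have "((\<lambda>t. (\<omega> (\<gamma> t))^2) has_integral 0) {0..1}"
    using Cauchy_integral_circlepath_0_param[OF hol2 r, of 0] r \<gamma>(2) \<omega>0 by (simp add: \<gamma>_def)
  from has_integral_Re[OF this]
  have Re_int: "((\<lambda>t. Re ((\<omega> (\<gamma> t))^2)) has_integral 0) {0..1}"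
    by simp
  have "continuous_on {0..1} (\<lambda>t. \<omega> (\<gamma> t))"
    unfolding \<gamma>_def using r by (intro continuous_on_compose_circlepath_0 holomorphic_on_imp_continuous_on hol) auto
  then have "(\<lambda>t. (Im (\<omega> (\<gamma> t)))^2) integrable_on {0..1}"
    by (intro integrable_continuous_interval continuous_intros)
  then have "((\<lambda>t. 2 * (Im (\<omega> (\<gamma> t)))^2) has_integral 2 * I) {0..1}"
    unfolding I_def by (intro has_integral_mult_right integrable_integral)
  then have bound_int: "((\<lambda>t. (Re ((\<omega> (\<gamma> t))^2) + 2 * (Im (\<omega> (\<gamma> t)))^2) * C) has_integral ((0 + 2 * I) * C)) {0..1}"
    by (intro has_integral_mult_left has_integral_add Re_int)
  have Cauchy: "((\<lambda>t. (\<omega> (\<gamma> t))^2 * \<gamma> t / (\<gamma> t - w)) has_integral (\<omega> w)^2) {0..1}"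
    unfolding \<gamma>_def using Cauchy_integral_circlepath_0_param[OF hol2 r w] .
  have pointwise: "norm ((\<omega> (\<gamma> t))^2 * \<gamma> t / (\<gamma> t - w)) \<le> (Re ((\<omega> (\<gamma> t))^2) + 2 * (Im (\<omega> (\<gamma> t)))^2) * C"
    if "t \<in> {0..1}" for t
  proof -
    have d: "r - cmod w \<le> cmod (\<gamma> t - w)" using norm_triangle_ineq2[of "\<gamma> t" w] \<gamma>(1)[of t] by simp
    have "norm ((\<omega> (\<gamma> t))^2 * \<gamma> t / (\<gamma> t - w)) = cmod ((\<omega> (\<gamma> t))^2) * (r / cmod (\<gamma> t - w))"
      by (simp add: norm_mult norm_divide \<gamma>)
    also have "\<dots> \<le> cmod ((\<omega> (\<gamma> t))^2) * C"
      unfolding C_def using d w r by (intro mult_left_mono divide_left_mono mult_pos_pos) auto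
    also have "cmod ((\<omega> (\<gamma> t))^2) = Re ((\<omega> (\<gamma> t))^2) + 2 * (Im (\<omega> (\<gamma> t)))^2"
      by (simp add: norm_power cmod_power2 Re_power2)
    finally show ?thesis .
  qed
  have "norm ((\<omega> w)^2) = norm (integral {0..1} (\<lambda>t. (\<omega> (\<gamma> t))^2 * \<gamma> t / (\<gamma> t - w)))"
    using integral_unique[OF Cauchy] by simp
  also have "\<dots> \<le> integral {0..1} (\<lambda>t. (Re ((\<omega> (\<gamma> t))^2) + 2 * (Im (\<omega> (\<gamma> t)))^2) * C)"
    using Cauchy bound_int pointwise by (intro integral_norm_bound_integral) blast+
  also have "\<dots> = (0 + 2 * I) * C"
    by (rule integral_unique[OF bound_int])
  finally have "norm ((\<omega> w)^2) \<le> (0 + 2 * I) * C" .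
  then show ?thesis by (simp add: norm_power I_def C_def \<gamma>_def)
qed

lemma inner_function_radial_limits:
  assumes "inner_function \<phi>"
  obtains N where "negligible N"
    "\<And>t. t \<in> {0..1} - N \<Longrightarrow>
       \<exists>L. ((\<lambda>r::real. \<phi> (complex_of_real r * cis (2 * pi * t))) \<longlongrightarrow> L) (at_left 1) \<and> norm L = 1"
proof -
  define P where "P = (\<lambda>\<theta>. \<theta> \<in> {0..2*pi} \<longrightarrow>
        (\<exists>L. ((\<lambda>r::real. \<phi> (complex_of_real r * cis \<theta>)) \<longlongrightarrow> L) (at_left 1) \<and> norm L = 1))"
  have "AE \<theta> in lborel. P \<theta>" using assms unfolding inner_function_def P_def by blast
  then obtain N0 where N0: "{\<theta> \<in> space lborel. \<not> P \<theta>} \<subseteq> N0" "emeasure lborel N0 = 0" "N0 \<in> sets lborel"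
    by (rule AE_E)
  then have "negligible N0"
    by (simp add: negligible_iff_null_sets null_sets_completionI null_setsI)
  moreover have "(\<lambda>\<theta>::real. \<theta> / (2 * pi)) differentiable_on N0"
    by (auto intro!: derivative_eq_intros simp: differentiable_on_def differentiable_def)
  ultimately have "negligible ((\<lambda>\<theta>. \<theta> / (2 * pi)) ` N0)"
    by (intro negligible_differentiable_image_negligible) auto
  moreover have "P (2 * pi * t)" if "t \<notin> (\<lambda>\<theta>. \<theta> / (2 * pi)) ` N0" for t
    using that N0(1) by (force simp: image_iff)
  ultimately show ?thesis
    using that by (fastforce simp: P_def)
qed

lemma integral_Im_square_circlepath_tendsto_zero:
  assumes st\<omega>: "schwarz_type \<omega>" and st\<phi>: "schwarz_type \<phi>"
    and TP: "\<forall>f\<in>caratheodory. T_op (ell \<circ> \<omega>) \<phi> f \<in> caratheodory"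
    and inner: "inner_function \<phi>"
    and r: "\<And>k. 0 < r k \<and> r k < 1" and r1: "r \<longlonglongrightarrow> 1"
  shows "(\<lambda>k. integral {0..1} (\<lambda>t. (Im (\<omega> (circlepath 0 (r k) t)))^2)) \<longlonglongrightarrow> 0"
proof -
  obtain N where N: "negligible N" and radial: "\<And>t. t \<in> {0..1} - N \<Longrightarrow>
       \<exists>L. ((\<lambda>r::real. \<phi> (complex_of_real r * cis (2 * pi * t))) \<longlongrightarrow> L) (at_left 1) \<and> norm L = 1"
    using inner_function_radial_limits[OF inner] by blast
  define f where "f = (\<lambda>k t. (Im (\<omega> (circlepath 0 (r k) t)))^2)"
  have spike: "negligible (({0..1} - N - {0..1}) \<union> ({0..1} - ({0..1} - N)))"
    by (rule negligible_subset[OF N]) auto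
  have int: "f k integrable_on {0..1}" for k
    unfolding f_def using st\<omega> r[of k]
    by (intro integrable_continuous_interval continuous_intros continuous_on_compose_circlepath_0
        holomorphic_on_imp_continuous_on) (auto simp: schwarz_type_def unit_disk_def)
  have "(\<lambda>k. integral ({0..1} - N) (f k)) \<longlonglongrightarrow> integral ({0..1} - N) (\<lambda>_. 0)"
  proof (rule dominated_convergence(2))
    show "f k integrable_on {0..1} - N" for k
      using int integrable_spike_set_eq[OF spike] by blast
    show "(\<lambda>_. 1::real) integrable_on {0..1} - N"
      using integrable_spike_set_eq[OF spike] by blast
    show "norm (f k t) \<le> 1" for k t
    proof -
      have "circlepath 0 (r k) t \<in> unit_disk"
        using r[of k] by (simp add: unit_disk_def norm_circlepath_0)
      then have "\<bar>Im (\<omega> (circlepath 0 (r k) t))\<bar> \<le> 1"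
        using st\<omega> abs_Im_le_cmod[of "\<omega> (circlepath 0 (r k) t)"]
        by (force simp: schwarz_type_def unit_disk_def)
      then show ?thesis by (simp add: f_def abs_square_le_1)
    qed
    show "(\<lambda>k. f k t) \<longlonglongrightarrow> 0" if "t \<in> {0..1} - N" for t
      using radial[OF that] Im_tendsto_zero_radially[OF st\<omega> st\<phi> TP _ _ r r1]
        tendsto_power[where n = 2 and a = 0]
      by (fastforce simp: f_def circlepath_0_eq_cis)
  qed
  moreover have "integral ({0..1} - N) g = integral {0..1} g" for g :: "real \<Rightarrow> real"
    by (rule integral_spike_set) (use N in \<open>auto intro: negligible_subset\<close>)
  ultimately show ?thesis by (simp add: f_def)
qed

lemma inner_function_omega_zero:
  assumes st\<omega>: "schwarz_type \<omega>" and st\<phi>: "schwarz_type \<phi>"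
    and TP: "\<forall>f\<in>caratheodory. T_op (ell \<circ> \<omega>) \<phi> f \<in> caratheodory"
    and inner: "inner_function \<phi>" and w: "w \<in> unit_disk"
  shows "\<omega> w = 0"
proof -
  define r where "r = (\<lambda>k::nat. 1 - (1/2::real) ^ Suc k)"
  have r: "0 < r k \<and> r k < 1" for k
    using power_le_one[of "1/2::real" k] by (simp add: r_def)
  have "(\<lambda>k. 1 - (1/2::real) ^ Suc k) \<longlonglongrightarrow> 1 - 0"
    by (intro tendsto_intros LIMSEQ_Suc LIMSEQ_realpow_zero) auto
  then have r1: "r \<longlonglongrightarrow> 1" by (simp add: r_def)
  define I where "I = (\<lambda>k. integral {0..1} (\<lambda>t. (Im (\<omega> (circlepath 0 (r k) t)))^2))"
  have hol: "\<omega> holomorphic_on ball 0 1" and \<omega>0: "\<omega> 0 = 0"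
    using st\<omega> by (auto simp: schwarz_type_def unit_disk_def)
  have w1: "cmod w < 1" using w by (simp add: unit_disk_def)
  have "\<forall>\<^sub>F k in sequentially. cmod w < r k"
    using order_tendstoD(1)[OF r1 w1] .
  then have "\<forall>\<^sub>F k in sequentially. (cmod (\<omega> w))^2 \<le> 2 * I k * (r k / (r k - cmod w))"
    by eventually_elim (use norm_square_le_integral_Im_square[OF hol \<omega>0] r in \<open>simp add: I_def\<close>)
  moreover have "(\<lambda>k. 2 * I k * (r k / (r k - cmod w))) \<longlonglongrightarrow> 2 * 0 * (1 / (1 - cmod w))"
    unfolding I_def using w1
    by (intro tendsto_intros r1 integral_Im_square_circlepath_tendsto_zero[OF st\<omega> st\<phi> TP inner r]) auto
  ultimately have "(cmod (\<omega> w))^2 \<le> 2 * 0 * (1 / (1 - cmod w))"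
    by (intro tendsto_le[OF _ _ tendsto_const]) auto
  then show ?thesis by simp
qed

theorem theorem4p1:
  fixes \<phi> \<omega> :: "complex \<Rightarrow> complex"
  assumes "schwarz_type \<phi>" and "schwarz_type \<omega>"
    and "\<forall>f\<in>caratheodory. T_op (ell \<circ> \<omega>) \<phi> f \<in> caratheodory"
    and "\<not> is_rotation \<phi>"
  shows "\<exists>G\<in>caratheodory.
           (\<forall>z\<in>unit_disk. T_op (ell \<circ> \<omega>) \<phi> G z = G z)
         \<and> (\<forall>H\<in>caratheodory. (\<forall>z\<in>unit_disk. T_op (ell \<circ> \<omega>) \<phi> H z = H z) \<longrightarrow> (\<forall>z\<in>unit_disk. H z = G z))
         \<and> (\<forall>f\<in>caratheodory. \<forall>K. compact K \<and> K \<subseteq> unit_disk \<longrightarrow>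
              uniform_limit K (\<lambda>n. (T_op (ell \<circ> \<omega>) \<phi> ^^ n) f) G sequentially)
         \<and> (inner_function \<phi> \<longrightarrow> (\<forall>z\<in>unit_disk. G z = 1))"
proof -
  let ?T = "T_op (ell \<circ> \<omega>) \<phi>"
  define G where "G = (\<lambda>z. lim (\<lambda>n. (?T ^^ n) (\<lambda>_. 1) z))"
  have \<phi>_disk: "\<phi> ` unit_disk \<subseteq> unit_disk" using assms(1) by (simp add: schwarz_type_def)
  have unif: "\<forall>f\<in>caratheodory. \<forall>K. compact K \<and> K \<subseteq> unit_disk \<longrightarrow>
      uniform_limit K (\<lambda>n. (?T ^^ n) f) G sequentially"
    unfolding G_def using uniform_limit_funpow_T_op[OF assms(3,1,4)] by blast
  have lim: "(\<lambda>n. (?T ^^ n) f z) \<longlonglongrightarrow> G z" if "f \<in> caratheodory" "z \<in> unit_disk" for f z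
  proof -
    have "uniform_limit {z} (\<lambda>n. (?T ^^ n) f) G sequentially"
      by (rule unif[rule_format, OF that(1)]) (use that(2) in auto)
    then show ?thesis by (rule tendsto_uniform_limitI) simp
  qed
  have unique: "\<forall>H\<in>caratheodory. (\<forall>z\<in>unit_disk. ?T H z = H z) \<longrightarrow> (\<forall>z\<in>unit_disk. H z = G z)"
  proof (intro ballI impI)
    fix H z assume H: "H \<in> caratheodory" and "\<forall>z\<in>unit_disk. ?T H z = H z" and z: "z \<in> unit_disk"
    then have "(\<lambda>n. (?T ^^ n) H z) = (\<lambda>n. H z)" using funpow_T_op_fixed[OF \<phi>_disk] by simp
    then show "H z = G z" using lim[OF H z] by (simp add: LIMSEQ_const_iff)
  qed
  have "G \<in> caratheodory"
  proof (rule caratheodory_locally_uniform_limit)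
    show "(?T ^^ n) (\<lambda>_. 1) \<in> caratheodory" for n
      by (rule funpow_T_op_caratheodory[OF assms(3) const_one_caratheodory])
    show "uniform_limit K (\<lambda>n. (?T ^^ n) (\<lambda>_. 1)) G sequentially" if "compact K" "K \<subseteq> unit_disk" for K
      by (rule unif[rule_format, OF const_one_caratheodory]) (use that in blast)
  qed
  moreover have "\<forall>z\<in>unit_disk. ?T G z = G z"
    using T_op_fixed_of_limit[OF \<phi>_disk lim[OF const_one_caratheodory]] by simp
  moreover have "inner_function \<phi> \<longrightarrow> (\<forall>z\<in>unit_disk. G z = 1)"
  proof
    assume "inner_function \<phi>"
    then have "\<forall>z\<in>unit_disk. ?T (\<lambda>_. 1) z = 1"
      using inner_function_omega_zero[OF assms(2,1,3)] by (simp add: T_op_def ell_def)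
    then show "\<forall>z\<in>unit_disk. G z = 1"
      using unique const_one_caratheodory by simp
  qed
  ultimately show ?thesis
    using unif unique by (intro bexI[where x = G] conjI) assumption+
qed

end
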